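(* Assume there are constants $\gamma_t\ge 0$ ($t=0,\dots,T-1$) with $|C_t(x)-C_t(y)|\le\gamma_t|x-y|$ for all $x,y$. Then for every $t=0,1,\dots,T-1$ and all $x'\le x$: $H_t(x')-H_t(x)\le\bar\psi_t(x-x',x)$ and $V_t(x')-V_t(x)\le\bar\varphi_t(x-x',x)$.
   Context: Model. Fix an integer horizon $T\ge 2$, a discount factor $\alpha\in(0,1]$, and for $t=0,\dots,T-1$: unit ordering costs $c_t\in\mathbb R$, a salvage coefficient $c_T\in\mathbb R$, setup costs $K_t\ge 0$, functions $G_t:\mathbb R\to\mathbb R$, and independent nonnegative random demands $D_0,\dots,D_{T-1}$ with right-continuous distribution functions $F_t$ and finite means; all expectations appearing are assumed finite. Put $C_t(y)=(c_t-\alpha c_{t+1})y+G_t(y)+\alpha c_{t+1}E[D_t]$. Standing assumptions: (i) each $C_t$ is convex with $C_t(y)\to+\infty$ as $|y|\to\infty$; (ii) $K_t\ge \alpha K_{t+1}$ for $t=0,\dots,T-2$. Grid construction. Fix $\theta>0$, $z_m=m\theta$, $Z_\theta=\{z_m:m\in\mathbb Z\}$, $f_t(n)=F_t(z_{n+1})-F_t(z_n)$ ($n\ge -1$). $C^m_t=\min\{y: C_t(y)=\min_x C_t(x)\}$; with $z_{n_0}<C^m_t\le z_{n_0+1}$, $S^U_t=\min\{z_m\in Z_\theta: z_m\ge C^m_t,\ C_t(z_m)>C_t(z_{n_0})+K_t\}$. $s_{T-1}$ is a point with $s_{T-1}\le C^m_{T-1}$, $C_{T-1}(s_{T-1})=C_{T-1}(C^m_{T-1})+K_{T-1}$;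 $\bar I_{T-1}=s_{T-1}$. For $t=T-2,\dots,0$: $I_t=\max\{z_m\in Z_\theta: z_m<\min(\bar I_{t+1}-\theta,C^m_t)\}$, $\bar I_t=\max\{z_m\in Z_\theta: z_m\le I_t,\ C_t(z_m)>C_t(I_t)+K_t\}+\theta$. $H_{T-1}=C_{T-1}$, $S_{T-1}=C^m_{T-1}$; $V_t(y)=H_t(S_t)+K_t$ for $y<s_t$, $V_t(y)=H_t(y)$ for $y\ge s_t$. For $t=T-2,\dots,0$: $H_t(y)=C_t(y)+\alpha\sum_{n=-1}^\infty V_{t+1}(y-z_n)f_t(n)$; $S_t=\max\{z_m\in Z_\theta: I_t\le z_m\le S^U_t,\ H_t(z_m)=\min\{H_t(z_n):z_n\in Z_\theta, I_t\le z_n\le S^U_t\}\}$; $s_t=S_t$ if $K_t=0$, else $s_t=\min\{z_m\in Z_\theta:\bar I_t\le z_m\le S_t,\ H_t(z_m)\le H_t(S_t)+K_t\}$. Upper estimate functions. $\bar\psi_{T-1}(x,y)=\gamma_{T-1}x$ for all $x,y$; $\bar\varphi_{T-1}(x,y)=0$ if $y<s_{T-1}$ and $\bar\varphi_{T-1}(x,y)=\gamma_{T-1}x$ if $y\ge s_{T-1}$. For $t=0,\dots,T-2$: $\bar\psi_t(x,y)=\gamma_tx$ if $y<s_{t+1}-\theta$, and otherwise $\bar\psi_t(x,y)=\gamma_tx+\alpha\sum_{m=-1}^{n-1}\bar\varphi_{t+1}(x,y-z_m)f_t(m)$, where $n$ is the integer with $z_{n-1}\le y-s_{t+1}<z_n$;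 and $\bar\varphi_t(x,y)=0$ if $y<s_t$, $\bar\varphi_t(x,y)=\bar\psi_t(y-s_t+\theta,y)$ if $y\ge s_t$ and $y-x<s_t$, $\bar\varphi_t(x,y)=\bar\psi_t(x,y)$ if $y\ge s_t$ and $y-x\ge s_t$. *)

theory Defs
  imports "HOL-Probability.Probability"
begin

text \<open>C_t(y) = (c_t - alpha c_{t+1}) y + G_t(y) + alpha c_{t+1} E[D_t];
  the demand D_t is represented by its distribution, a probability measure on the reals.\<close>
definition Cfun :: "real \<Rightarrow> (nat \<Rightarrow> real) \<Rightarrow> (nat \<Rightarrow> real \<Rightarrow> real) \<Rightarrow> (nat \<Rightarrow> real measure)
    \<Rightarrow> nat \<Rightarrow> real \<Rightarrow> real" where
  "Cfun \<alpha> c G D t y = (c t - \<alpha> * c (Suc t)) * y + G t y + \<alpha> * c (Suc t) * (\<integral>x. x \<partial>D t)"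

definition Fdist :: "(nat \<Rightarrow> real measure) \<Rightarrow> nat \<Rightarrow> real \<Rightarrow> real" where
  "Fdist D t x = measure (D t) {..x}"

definition zg :: "real \<Rightarrow> int \<Rightarrow> real" where
  "zg \<theta> m = real_of_int m * \<theta>"

definition fgrid :: "(nat \<Rightarrow> real \<Rightarrow> real) \<Rightarrow> real \<Rightarrow> nat \<Rightarrow> int \<Rightarrow> real" where
  "fgrid F \<theta> t n = F t (zg \<theta> (n + 1)) - F t (zg \<theta> n)"

definition Cmin :: "(real \<Rightarrow> real) \<Rightarrow> real" where
  "Cmin Ct = (LEAST y. \<forall>x. Ct y \<le> Ct x)"

definition SUg :: "real \<Rightarrow> (real \<Rightarrow> real) \<Rightarrow> real \<Rightarrow> real" where
  "SUg \<theta> Ct Kt = (let n0 = \<lceil>Cmin Ct / \<theta>\<rceil> - 1 in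
     zg \<theta> (LEAST m. zg \<theta> m \<ge> Cmin Ct \<and> Ct (zg \<theta> m) > Ct (zg \<theta> n0) + Kt))"

definition slast :: "(real \<Rightarrow> real) \<Rightarrow> real \<Rightarrow> real" where
  "slast Ct Kt = (THE s. s \<le> Cmin Ct \<and> Ct s = Ct (Cmin Ct) + Kt)"

definition Ig :: "real \<Rightarrow> (real \<Rightarrow> real) \<Rightarrow> real \<Rightarrow> real" where
  "Ig \<theta> Ct Ibn = zg \<theta> (GREATEST m. zg \<theta> m < min (Ibn - \<theta>) (Cmin Ct))"

definition Ibarg :: "real \<Rightarrow> (real \<Rightarrow> real) \<Rightarrow> real \<Rightarrow> real \<Rightarrow> real" where
  "Ibarg \<theta> Ct Kt I = zg \<theta> (GREATEST m. zg \<theta> m \<le> I \<and> Ct (zg \<theta> m) > Ct I + Kt) + \<theta>"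

definition Vof :: "(real \<Rightarrow> real) \<Rightarrow> real \<Rightarrow> real \<Rightarrow> real \<Rightarrow> real \<Rightarrow> real" where
  "Vof H S s Kt y = (if y < s then H S + Kt else H y)"

text \<open>H_t(y) = C_t(y) + alpha * sum_{n=-1}^infty V_{t+1}(y - z_n) f_t(n)  (index n = k - 1).\<close>
definition Hnext :: "real \<Rightarrow> real \<Rightarrow> (real \<Rightarrow> real) \<Rightarrow> (nat \<Rightarrow> real \<Rightarrow> real) \<Rightarrow> nat
    \<Rightarrow> (real \<Rightarrow> real) \<Rightarrow> real \<Rightarrow> real" where
  "Hnext \<alpha> \<theta> Ct F t Vn y =
     Ct y + \<alpha> * (\<Sum>k. Vn (y - zg \<theta> (int k - 1)) * fgrid F \<theta> t (int k - 1))"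

definition Sg :: "real \<Rightarrow> (real \<Rightarrow> real) \<Rightarrow> real \<Rightarrow> real \<Rightarrow> real" where
  "Sg \<theta> H I SU = (let M = {m. I \<le> zg \<theta> m \<and> zg \<theta> m \<le> SU};
                       mv = Min ((\<lambda>m. H (zg \<theta> m)) ` M)
                   in zg \<theta> (Max {m \<in> M. H (zg \<theta> m) = mv}))"

definition sg :: "real \<Rightarrow> (real \<Rightarrow> real) \<Rightarrow> real \<Rightarrow> real \<Rightarrow> real \<Rightarrow> real" where
  "sg \<theta> H Kt Ib S = (if Kt = 0 then S
     else zg \<theta> (Min {m. Ib \<le> zg \<theta> m \<and> zg \<theta> m \<le> S \<and> H (zg \<theta> m) \<le> H S + Kt}))"

text \<open>stage j computes (H_t, S_t, s_t, Ibar_t) for t = T-1-j.\<close>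
primrec stage :: "nat \<Rightarrow> real \<Rightarrow> real \<Rightarrow> (nat \<Rightarrow> real \<Rightarrow> real) \<Rightarrow> (nat \<Rightarrow> real)
    \<Rightarrow> (nat \<Rightarrow> real \<Rightarrow> real) \<Rightarrow> nat \<Rightarrow> (real \<Rightarrow> real) \<times> real \<times> real \<times> real" where
  "stage T \<alpha> \<theta> C K F 0 =
     (C (T - 1), Cmin (C (T - 1)), slast (C (T - 1)) (K (T - 1)), slast (C (T - 1)) (K (T - 1)))"
| "stage T \<alpha> \<theta> C K F (Suc j) =
     (let t = T - 2 - j;
          (Hn, Sn, sn, Ibn) = stage T \<alpha> \<theta> C K F j;
          Vn = Vof Hn Sn sn (K (Suc t));
          H = Hnext \<alpha> \<theta> (C t) F t Vn;
          I = Ig \<theta> (C t) Ibn;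
          Ib = Ibarg \<theta> (C t) (K t) I;
          S = Sg \<theta> H I (SUg \<theta> (C t) (K t));
          s = sg \<theta> H (K t) Ib S
      in (H, S, s, Ib))"

definition Hs where "Hs T \<alpha> \<theta> C K F t = fst (stage T \<alpha> \<theta> C K F (T - 1 - t))"
definition Ss where "Ss T \<alpha> \<theta> C K F t = fst (snd (stage T \<alpha> \<theta> C K F (T - 1 - t)))"
definition ss where "ss T \<alpha> \<theta> C K F t = fst (snd (snd (stage T \<alpha> \<theta> C K F (T - 1 - t))))"
definition Vs where
  "Vs T \<alpha> \<theta> C K F t y = Vof (Hs T \<alpha> \<theta> C K F t) (Ss T \<alpha> \<theta> C K F t) (ss T \<alpha> \<theta> C K F t) (K t) y"

text \<open>psiphi j gives (psibar_t, phibar_t) for t = T-1-j; s is the sequence s_t.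
  In psibar_t the sum runs over m = -1 .. n-1 with n-1 = floor((y - s_{t+1})/theta).\<close>
primrec psiphi :: "nat \<Rightarrow> real \<Rightarrow> real \<Rightarrow> (nat \<Rightarrow> real \<Rightarrow> real) \<Rightarrow> (nat \<Rightarrow> real) \<Rightarrow> (nat \<Rightarrow> real)
    \<Rightarrow> nat \<Rightarrow> (real \<Rightarrow> real \<Rightarrow> real) \<times> (real \<Rightarrow> real \<Rightarrow> real)" where
  "psiphi T \<alpha> \<theta> F \<gamma> s 0 =
     ((\<lambda>x y. \<gamma> (T - 1) * x), (\<lambda>x y. if y < s (T - 1) then 0 else \<gamma> (T - 1) * x))"
| "psiphi T \<alpha> \<theta> F \<gamma> s (Suc j) =
     (let t = T - 2 - j;
          \<phi>n = snd (psiphi T \<alpha> \<theta> F \<gamma> s j);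
          \<psi> = (\<lambda>x y. if y < s (Suc t) - \<theta> then \<gamma> t * x
                 else \<gamma> t * x + \<alpha> * (\<Sum>m \<in> {-1 .. \<lfloor>(y - s (Suc t)) / \<theta>\<rfloor>}.
                        \<phi>n x (y - zg \<theta> m) * fgrid F \<theta> t m));
          \<phi> = (\<lambda>x y. if y < s t then 0
                 else if y - x < s t then \<psi> (y - s t + \<theta>) y else \<psi> x y)
      in (\<psi>, \<phi>))"

definition psibar where "psibar T \<alpha> \<theta> F \<gamma> s t = fst (psiphi T \<alpha> \<theta> F \<gamma> s (T - 1 - t))"
definition phibar where "phibar T \<alpha> \<theta> F \<gamma> s t = snd (psiphi T \<alpha> \<theta> F \<gamma> s (T - 1 - t))"

end

theory Submission
  imports Defs
begin

text \<open>
  The estimates follow by backward induction over the stages, carrying the invariant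
  \<open>Ibar_t \<le> s_t\<close>. Since \<open>V_{t+1}\<close> is constant below \<open>s_{t+1}\<close>, the difference
  \<open>H_t(x') - H_t(x)\<close> is the Lipschitz term of \<open>C_t\<close> plus finitely many shifted differences of
  \<open>V_{t+1}\<close>, each bounded by \<open>phibar_{t+1}\<close>. For \<open>V_t\<close> the only new case is
  \<open>x' < s_t \<le> x\<close>, where \<open>V_t(x') = H_t(S_t) + K_t\<close>; it reduces to the bound for \<open>H_t\<close> at
  \<open>s_t - \<theta>\<close> once \<open>H_t(S_t) + K_t \<le> H_t(s_t - \<theta>)\<close>. This gap is built into the grid
  construction: either \<open>s_t - \<theta>\<close> lies in the search range \<open>[Ibar_t, S_t]\<close> of \<open>s_t\<close> and was
  rejected, or it is the grid point just below \<open>Ibar_t\<close>. There \<open>H_t\<close> is \<open>C_t\<close> plus a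
  constant, because all points up to \<open>I_t\<close> lie below \<open>Ibar_{t+1} - \<theta> \<le> s_{t+1} - \<theta>\<close>, and
  by the choice of \<open>Ibar_t\<close> the value of \<open>C_t\<close> there exceeds \<open>C_t(I_t) + K_t\<close>, while
  \<open>H_t(I_t) \<ge> H_t(S_t)\<close>.
\<close>

lemma zg_le_iff: "0 < \<theta> \<Longrightarrow> zg \<theta> m \<le> zg \<theta> n \<longleftrightarrow> m \<le> n"
  by (simp add: zg_def)

lemma zg_diff_step: "zg \<theta> m - \<theta> = zg \<theta> (m - 1)"
  by (simp add: zg_def algebra_simps)

lemma zg_add_step: "zg \<theta> m + \<theta> = zg \<theta> (m + 1)"
  by (simp add: zg_def algebra_simps)

lemma zg_floor_le: "0 < \<theta> \<Longrightarrow> zg \<theta> \<lfloor>v / \<theta>\<rfloor> \<le> v"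
  by (simp add: zg_def pos_le_divide_eq[symmetric])

lemma less_zg_floor_add_one: "0 < \<theta> \<Longrightarrow> v < zg \<theta> (\<lfloor>v / \<theta>\<rfloor> + 1)"
  by (simp add: zg_def pos_divide_less_eq[symmetric])

lemma le_zg_ceiling: "0 < \<theta> \<Longrightarrow> v \<le> zg \<theta> \<lceil>v / \<theta>\<rceil>"
  by (simp add: zg_def pos_divide_le_eq[symmetric])

lemma int_GreatestI_bounded:
  fixes P :: "int \<Rightarrow> bool"
  assumes "P m0" and "\<And>m. P m \<Longrightarrow> m \<le> b"
  shows "P (GREATEST m. P m)"
proof -
  let ?A = "{m. P m \<and> m0 \<le> m}"
  have fin: "finite ?A" by (rule finite_subset[of _ "{m0..b}"]) (use assms(2) in auto)
  have m0: "m0 \<in> ?A" using assms(1) by simp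
  have "P (Max ?A)" using Max_in[OF fin] m0 by blast
  moreover have "m \<le> Max ?A" if "P m" for m
    using that Max_ge[OF fin, of m] Max_ge[OF fin m0] by (cases "m0 \<le> m") auto
  ultimately show ?thesis by (rule GreatestI2_order)
qed

lemma int_LeastI_bounded:
  fixes P :: "int \<Rightarrow> bool"
  assumes "P m0" and "\<And>m. P m \<Longrightarrow> b \<le> m"
  shows "P (LEAST m. P m)"
proof -
  let ?A = "{m. P m \<and> m \<le> m0}"
  have fin: "finite ?A" by (rule finite_subset[of _ "{b..m0}"]) (use assms(2) in auto)
  have m0: "m0 \<in> ?A" using assms(1) by simp
  have "P (Min ?A)" using Min_in[OF fin] m0 by blast
  moreover have "Min ?A \<le> m" if "P m" for m
    using that Min_le[OF fin, of m] Min_le[OF fin m0] by (cases "m \<le> m0") auto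
  ultimately show ?thesis by (rule LeastI2_order)
qed

lemma grid_GreatestI:
  assumes "0 < \<theta>" and "P m0" and "\<And>m. P m \<Longrightarrow> zg \<theta> m \<le> b"
  shows "P (GREATEST m. P m)"
proof (rule int_GreatestI_bounded[where P = P, OF assms(2)])
  fix m assume "P m"
  then have "zg \<theta> m \<le> zg \<theta> \<lceil>b / \<theta>\<rceil>"
    using assms(3) le_zg_ceiling[OF assms(1), of b] by (meson order_trans)
  then show "m \<le> \<lceil>b / \<theta>\<rceil>" using zg_le_iff[OF assms(1)] by blast
qed

lemma grid_LeastI:
  assumes "0 < \<theta>" and "P m0" and "\<And>m. P m \<Longrightarrow> b \<le> zg \<theta> m"
  shows "P (LEAST m. P m)"
proof (rule int_LeastI_bounded[where P = P, OF assms(2)])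
  fix m assume "P m"
  then have "zg \<theta> \<lfloor>b / \<theta>\<rfloor> \<le> zg \<theta> m"
    using assms(3) zg_floor_le[OF assms(1), of b] by (meson order_trans)
  then show "\<lfloor>b / \<theta>\<rfloor> \<le> m" using zg_le_iff[OF assms(1)] by blast
qed

section \<open>Convex coercive functions\<close>

locale coercive_convex =
  fixes C :: "real \<Rightarrow> real"
  assumes convex: "convex_on UNIV C"
    and coercive: "filterlim C at_top at_infinity"
begin

lemma continuous: "continuous_on UNIV C"
  using convex_on_continuous[OF open_UNIV convex] .

lemma coercive_bound: "\<exists>R. \<forall>y. R \<le> \<bar>y\<bar> \<longrightarrow> M \<le> C y"
proof -
  have "eventually (\<lambda>y. M \<le> C y) at_infinity" using coercive by (simp add: filterlim_at_top)
  then show ?thesis by (auto simp: eventually_at_infinity)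
qed

lemma grid_point_left: "0 < \<theta> \<Longrightarrow> \<exists>m. zg \<theta> m \<le> a \<and> M < C (zg \<theta> m)"
proof -
  assume \<theta>: "0 < \<theta>"
  obtain R where R: "\<forall>y. R \<le> \<bar>y\<bar> \<longrightarrow> M + 1 \<le> C y" using coercive_bound by blast
  define m where "m = \<lfloor>min a (- \<bar>R\<bar>) / \<theta>\<rfloor>"
  have "zg \<theta> m \<le> min a (- \<bar>R\<bar>)" unfolding m_def by (rule zg_floor_le[OF \<theta>])
  then have "zg \<theta> m \<le> a" "R \<le> \<bar>zg \<theta> m\<bar>" by arith+
  then show ?thesis using R by force
qed

lemma grid_point_right: "0 < \<theta> \<Longrightarrow> \<exists>m. a \<le> zg \<theta> m \<and> M < C (zg \<theta> m)"
proof -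
  assume \<theta>: "0 < \<theta>"
  obtain R where R: "\<forall>y. R \<le> \<bar>y\<bar> \<longrightarrow> M + 1 \<le> C y" using coercive_bound by blast
  define m where "m = \<lceil>max a \<bar>R\<bar> / \<theta>\<rceil>"
  have "max a \<bar>R\<bar> \<le> zg \<theta> m" unfolding m_def by (rule le_zg_ceiling[OF \<theta>])
  then have "a \<le> zg \<theta> m" "R \<le> \<bar>zg \<theta> m\<bar>" by arith+
  then show ?thesis using R by force
qed

lemma minimum_exists: "\<exists>x0. \<forall>x. C x0 \<le> C x"
proof -
  obtain R where R: "\<forall>y. R \<le> \<bar>y\<bar> \<longrightarrow> C 0 + 1 \<le> C y" using coercive_bound by blast
  define R' where "R' = max R 1"
  have "continuous_on {-R'..R'} C" using continuous_on_subset[OF continuous] by blast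
  moreover have "{-R'..R'} \<noteq> {}" unfolding R'_def by simp
  ultimately obtain x0 where x0: "x0 \<in> {-R'..R'}" "\<forall>y\<in>{-R'..R'}. C x0 \<le> C y"
    using continuous_attains_inf[OF compact_Icc] by blast
  have "C x0 \<le> C 0" using x0(2) unfolding R'_def by simp
  have "C x0 \<le> C x" for x
  proof (cases "x \<in> {-R'..R'}")
    case False
    then have "R \<le> \<bar>x\<bar>" unfolding R'_def by auto
    then show ?thesis using R \<open>C x0 \<le> C 0\<close> by force
  qed (use x0(2) in blast)
  then show ?thesis by blast
qed

lemma Cmin_least_minimiser: "(\<forall>x. C (Cmin C) \<le> C x) \<and> (\<forall>y. (\<forall>x. C y \<le> C x) \<longrightarrow> Cmin C \<le> y)"
proof -
  obtain x0 where x0: "\<forall>x. C x0 \<le> C x" using minimum_exists by blast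
  let ?M = "{y. \<forall>x. C y \<le> C x}"
  have "?M = {y. C y \<le> C x0}" using x0 by (auto intro: order_trans)
  then have closed: "closed ?M" using continuous by (auto intro: closed_Collect_le)
  obtain R where R: "\<forall>y. R \<le> \<bar>y\<bar> \<longrightarrow> C x0 + 1 \<le> C y" using coercive_bound by blast
  have "- \<bar>R\<bar> \<le> y" if "y \<in> ?M" for y
    using that R x0 by (smt (verit) mem_Collect_eq)
  then have bdd: "bdd_below ?M" by (rule bdd_belowI)
  have Inf_in: "Inf ?M \<in> ?M" using x0 by (intro closed_contains_Inf[OF _ bdd closed]) auto
  have "Cmin C = Inf ?M" unfolding Cmin_def
    by (rule Least_equality) (use Inf_in cInf_lower[OF _ bdd] in auto)
  then show ?thesis using Inf_in cInf_lower[OF _ bdd] by auto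
qed

lemma Cmin_minimal: "C (Cmin C) \<le> C x"
  using Cmin_least_minimiser by blast

lemma Cmin_le_minimiser: "(\<And>x. C y \<le> C x) \<Longrightarrow> Cmin C \<le> y"
  using Cmin_least_minimiser by blast

lemma convex_below_chord:
  assumes "a < b" "b < c"
  shows "C b \<le> C a + (b - a) / (c - a) * (C c - C a)"
proof -
  define u where "u = (b - a) / (c - a)"
  have u: "0 \<le> u" "u \<le> 1" using assms unfolding u_def by (auto simp: field_simps)
  have "u * (c - a) = b - a" using assms unfolding u_def by simp
  then have "b = (1 - u) *\<^sub>R a + u *\<^sub>R c" by (simp add: algebra_simps)
  then have "C b \<le> (1 - u) * C a + u * C c" using convex_onD[OF convex u] by simp
  then show ?thesis unfolding u_def[symmetric] by (simp add: algebra_simps)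
qed

lemma antimono_below_Cmin:
  assumes "a \<le> b" "b \<le> Cmin C"
  shows "C b \<le> C a"
proof (cases "a < b \<and> b < Cmin C")
  case True
  have "(b - a) / (Cmin C - a) * (C (Cmin C) - C a) \<le> 0"
    using True Cmin_minimal[of a] by (intro mult_nonneg_nonpos) auto
  then show ?thesis using convex_below_chord True by fastforce
next
  case False
  then have "a = b \<or> b = Cmin C" using assms by auto
  then show ?thesis using Cmin_minimal by auto
qed

lemma strict_antimono_below_Cmin:
  assumes "a < b" "b \<le> Cmin C" "C (Cmin C) < C a"
  shows "C b < C a"
proof (cases "b = Cmin C")
  case False
  have "(b - a) / (Cmin C - a) * (C (Cmin C) - C a) < 0"
    using assms False by (intro mult_pos_neg) auto
  then show ?thesis using convex_below_chord[of a b "Cmin C"] assms False by fastforce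
qed (use assms in simp)

lemma slast_spec:
  assumes "0 \<le> K"
  shows "slast C K \<le> Cmin C \<and> C (slast C K) = C (Cmin C) + K"
proof -
  let ?m = "Cmin C"
  obtain R where R: "\<forall>y. R \<le> \<bar>y\<bar> \<longrightarrow> C ?m + K \<le> C y" using coercive_bound by blast
  define a where "a = - \<bar>R\<bar> - \<bar>?m\<bar>"
  have "a \<le> ?m" "C ?m + K \<le> C a" using R unfolding a_def by auto
  moreover have "continuous_on {a..?m} C" using continuous_on_subset[OF continuous] by blast
  ultimately obtain s where s: "s \<le> ?m" "C s = C ?m + K"
    using IVT2'[of C ?m "C ?m + K" a] assms by auto
  have unique: "s1 = s2" if s12: "s1 \<le> ?m" "C s1 = C ?m + K" "s2 \<le> ?m" "C s2 = C ?m + K" for s1 s2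
  proof (rule ccontr)
    assume "s1 \<noteq> s2"
    then obtain l r where lr: "l < r" "r \<le> ?m" "C l = C ?m + K" "C r = C ?m + K"
      using s12 by (metis linorder_neqE)
    show False
    proof (cases "K = 0")
      case True
      then have "?m \<le> l" using lr Cmin_minimal by (intro Cmin_le_minimiser) simp
      then show False using lr by simp
    next
      case False
      then show False using strict_antimono_below_Cmin[of l r] lr assms by simp
    qed
  qed
  have "slast C K = s" unfolding slast_def by (rule the_equality) (use s unique in blast)+
  then show ?thesis using s by simp
qed

end

section \<open>One step of the grid construction\<close>

lemma Ig_grid_below:
  assumes "0 < \<theta>"
  obtains mI where "Ig \<theta> C Ibn = zg \<theta> mI" "zg \<theta> mI < Ibn - \<theta>" "zg \<theta> mI < Cmin C"
proof -
  define v where "v = min (Ibn - \<theta>) (Cmin C)"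
  have "zg \<theta> (\<lfloor>v / \<theta>\<rfloor> - 1) < v"
    using zg_floor_le[OF assms, of v] zg_diff_step[of \<theta> "\<lfloor>v / \<theta>\<rfloor>"] assms by linarith
  then have "zg \<theta> (GREATEST m. zg \<theta> m < v) < v"
    by (rule grid_GreatestI[OF assms, where b = v]) simp
  then show thesis using that unfolding Ig_def v_def by simp
qed

lemma Sg_grid_argmin:
  assumes "0 < \<theta>" "mI \<le> mU"
  obtains mS where "Sg \<theta> H (zg \<theta> mI) (zg \<theta> mU) = zg \<theta> mS" "mS \<in> {mI..mU}"
    "\<And>m. m \<in> {mI..mU} \<Longrightarrow> H (zg \<theta> mS) \<le> H (zg \<theta> m)"
proof -
  have M: "{m. zg \<theta> mI \<le> zg \<theta> m \<and> zg \<theta> m \<le> zg \<theta> mU} = {mI..mU}"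
    using zg_le_iff[OF assms(1)] by auto
  define mv where "mv = Min ((\<lambda>m. H (zg \<theta> m)) ` {mI..mU})"
  define mS where "mS = Max {m \<in> {mI..mU}. H (zg \<theta> m) = mv}"
  have "mv \<in> (\<lambda>m. H (zg \<theta> m)) ` {mI..mU}" unfolding mv_def using assms(2) by (intro Min_in) auto
  then have "mS \<in> {m \<in> {mI..mU}. H (zg \<theta> m) = mv}"
    unfolding mS_def by (intro Max_in) (auto intro: finite_subset[of _ "{mI..mU}"])
  moreover have "mv \<le> H (zg \<theta> m)" if "m \<in> {mI..mU}" for m unfolding mv_def using that by simp
  moreover have "Sg \<theta> H (zg \<theta> mI) (zg \<theta> mU) = zg \<theta> mS"
    unfolding Sg_def Let_def M mv_def mS_def ..
  ultimately show thesis using that by auto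
qed

lemma sg_grid_first:
  assumes "0 < \<theta>" "0 < K" "mb \<le> mS"
  obtains ms where "sg \<theta> H K (zg \<theta> mb) (zg \<theta> mS) = zg \<theta> ms" "ms \<in> {mb..mS}"
    "mb < ms \<Longrightarrow> H (zg \<theta> mS) + K < H (zg \<theta> (ms - 1))"
proof -
  define Q where "Q = {m \<in> {mb..mS}. H (zg \<theta> m) \<le> H (zg \<theta> mS) + K}"
  have Q: "{m. zg \<theta> mb \<le> zg \<theta> m \<and> zg \<theta> m \<le> zg \<theta> mS \<and> H (zg \<theta> m) \<le> H (zg \<theta> mS) + K} = Q"
    unfolding Q_def using zg_le_iff[OF assms(1)] by auto
  have fin: "finite Q" unfolding Q_def by (rule finite_subset[of _ "{mb..mS}"]) auto
  have "mS \<in> Q" unfolding Q_def using assms by simp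
  then have ms: "Min Q \<in> Q" using fin by (intro Min_in) auto
  have "H (zg \<theta> mS) + K < H (zg \<theta> (Min Q - 1))" if "mb < Min Q"
  proof (rule ccontr)
    assume "\<not> ?thesis"
    then have "Min Q - 1 \<in> Q" using that ms unfolding Q_def by auto
    then show False using Min_le[OF fin, of "Min Q - 1"] by simp
  qed
  moreover have "sg \<theta> H K (zg \<theta> mb) (zg \<theta> mS) = zg \<theta> (Min Q)"
    unfolding sg_def Q using assms(2) by simp
  ultimately show thesis using that ms unfolding Q_def by blast
qed

context coercive_convex
begin

lemma Ibarg_grid_above:
  assumes "0 < \<theta>" "0 \<le> K"
  obtains mb where "Ibarg \<theta> C K (zg \<theta> mI) = zg \<theta> (mb + 1)" "mb < mI"
    "C (zg \<theta> mI) + K < C (zg \<theta> mb)"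
proof -
  let ?P = "\<lambda>m. zg \<theta> m \<le> zg \<theta> mI \<and> C (zg \<theta> mI) + K < C (zg \<theta> m)"
  obtain m0 where "?P m0" using grid_point_left[OF assms(1)] by blast
  then have "?P (GREATEST m. ?P m)" by (rule grid_GreatestI[OF assms(1)]) blast
  moreover from this have "(GREATEST m. ?P m) \<noteq> mI" using assms(2) by auto
  ultimately have "(GREATEST m. ?P m) < mI" using zg_le_iff[OF assms(1)] by fastforce
  then show thesis using that \<open>?P (GREATEST m. ?P m)\<close>
    unfolding Ibarg_def zg_add_step by blast
qed

lemma SUg_grid_above:
  assumes "0 < \<theta>"
  obtains mU where "SUg \<theta> C K = zg \<theta> mU" "Cmin C \<le> zg \<theta> mU"
proof -
  define M where "M = C (zg \<theta> (\<lceil>Cmin C / \<theta>\<rceil> - 1)) + K"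
  let ?P = "\<lambda>m. Cmin C \<le> zg \<theta> m \<and> M < C (zg \<theta> m)"
  obtain m0 where "?P m0" using grid_point_right[OF assms(1)] by blast
  then have "?P (LEAST m. ?P m)" by (rule grid_LeastI[OF assms(1)]) blast
  then show thesis using that unfolding SUg_def Let_def M_def by blast
qed

lemma threshold_gap:
  assumes \<theta>: "0 < \<theta>" and K: "0 \<le> K"
    and H_below: "\<And>y. y < Ibn - \<theta> \<Longrightarrow> H y = C y + c0"
    and I_def: "I = Ig \<theta> C Ibn" and Ib_def: "Ib = Ibarg \<theta> C K I"
    and S_def: "S = Sg \<theta> H I (SUg \<theta> C K)" and s_def: "s = sg \<theta> H K Ib S"
  shows "Ib \<le> s \<and> H S + K \<le> H (s - \<theta>)"
proof -
  obtain mI where mI: "I = zg \<theta> mI" "zg \<theta> mI < Ibn - \<theta>" "zg \<theta> mI < Cmin C"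
    using Ig_grid_below[OF \<theta>] unfolding I_def by metis
  obtain mb where mb: "Ib = zg \<theta> (mb + 1)" "mb < mI" "C I + K < C (zg \<theta> mb)"
    using Ibarg_grid_above[OF \<theta> K] unfolding Ib_def mI(1) by metis
  obtain mU where mU: "SUg \<theta> C K = zg \<theta> mU" "Cmin C \<le> zg \<theta> mU"
    using SUg_grid_above[OF \<theta>] by metis
  have "mI \<le> mU" using mI(3) mU(2) zg_le_iff[OF \<theta>] by fastforce
  then obtain mS where mS: "S = zg \<theta> mS" "mS \<in> {mI..mU}"
      and S_min: "\<And>m. m \<in> {mI..mU} \<Longrightarrow> H S \<le> H (zg \<theta> m)"
    using Sg_grid_argmin[OF \<theta>] unfolding S_def mI(1) mU(1) by metis
  have H_C: "H (zg \<theta> m) = C (zg \<theta> m) + c0" if "m \<le> mI" for m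
    using that mI(2) zg_le_iff[OF \<theta>, of m mI] by (intro H_below) linarith
  have S_le_I: "H S \<le> H I" using S_min[of mI] mS(2) mI(1) by simp
  have Ib_le_S: "mb + 1 \<le> mS" using mb(2) mS(2) by simp
  show ?thesis
  proof (cases "K = 0")
    case True
    then have s: "s = S" unfolding s_def sg_def by simp
    have "H S \<le> H (zg \<theta> (mS - 1))"
    proof (cases "mI < mS")
      case True
      then show ?thesis using S_min mS(2) by simp
    next
      case False
      then have "mS = mI" using mS(2) by simp
      moreover have "C (zg \<theta> mI) \<le> C (zg \<theta> (mI - 1))"
        using mI(3) zg_le_iff[OF \<theta>] by (intro antimono_below_Cmin) auto
      ultimately show ?thesis using H_C[of mI] H_C[of "mI - 1"] mI(1) S_le_I by simp
    qed
    then show ?thesis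
      using True s mS(1) mb(1) Ib_le_S zg_le_iff[OF \<theta>] zg_diff_step[of \<theta> mS] by simp
  next
    case False
    then obtain ms where ms: "s = zg \<theta> ms" "ms \<in> {mb + 1..mS}"
        and gap: "mb + 1 < ms \<Longrightarrow> H S + K < H (zg \<theta> (ms - 1))"
      using sg_grid_first[OF \<theta> _ Ib_le_S] K unfolding s_def mb(1) mS(1) by (metis order_le_less)
    have "H S + K \<le> H (zg \<theta> (ms - 1))"
    proof (cases "mb + 1 < ms")
      case False
      then have "ms - 1 = mb" using ms(2) by simp
      then show ?thesis using H_C[of mb] H_C[of mI] mb mI(1) S_le_I by simp
    qed (use gap in simp)
    then show ?thesis using ms mb(1) zg_le_iff[OF \<theta>] zg_diff_step[of \<theta> ms] by simp
  qed
qed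

end

section \<open>The expected cost-to-go \<open>Hnext\<close>\<close>

definition left_increase_le :: "(real \<Rightarrow> real) \<Rightarrow> (real \<Rightarrow> real \<Rightarrow> real) \<Rightarrow> bool" where
  "left_increase_le f \<psi> \<longleftrightarrow> (\<forall>x x'. x' \<le> x \<longrightarrow> f x' - f x \<le> \<psi> (x - x') x)"

lemma fgrid_nonneg: "0 < \<theta> \<Longrightarrow> mono (F t) \<Longrightarrow> 0 \<le> fgrid F \<theta> t n"
  unfolding fgrid_def by (simp add: monoD zg_le_iff)

lemma summable_fgrid:
  assumes "0 < \<theta>" "mono (F t)" "\<And>a. F t a \<le> B"
  shows "summable (\<lambda>k. fgrid F \<theta> t (int k - 1))"
proof (rule summableI_nonneg_bounded)
  fix n
  show "0 \<le> fgrid F \<theta> t (int n - 1)" using fgrid_nonneg assms(1,2) by blast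
  have "(\<Sum>k<n. fgrid F \<theta> t (int k - 1)) = F t (zg \<theta> (int n - 1)) - F t (zg \<theta> (-1))"
    using sum_lessThan_telescope[of "\<lambda>k. F t (zg \<theta> (int k - 1))" n] by (simp add: fgrid_def)
  then show "(\<Sum>k<n. fgrid F \<theta> t (int k - 1)) \<le> B - F t (zg \<theta> (-1))"
    using assms(3) by simp
qed

lemma sums_grid_shift:
  fixes g :: "real \<Rightarrow> real" and f :: "int \<Rightarrow> real"
  assumes "0 < \<theta>" and vanish: "\<And>y. y < sn \<Longrightarrow> g y = 0"
  shows "(\<lambda>k. g (x - zg \<theta> (int k - 1)) * f (int k - 1))
           sums (\<Sum>m \<in> {-1 .. \<lfloor>(x - sn) / \<theta>\<rfloor>}. g (x - zg \<theta> m) * f m)"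
proof -
  define N where "N = nat (\<lfloor>(x - sn) / \<theta>\<rfloor> + 2)"
  have "g (x - zg \<theta> (int k - 1)) = 0" if "k \<notin> {..<N}" for k
  proof (rule vanish)
    have "zg \<theta> (\<lfloor>(x - sn) / \<theta>\<rfloor> + 1) \<le> zg \<theta> (int k - 1)"
      using that zg_le_iff[OF assms(1)] unfolding N_def by auto
    then show "x - zg \<theta> (int k - 1) < sn"
      using less_zg_floor_add_one[OF assms(1), of "x - sn"] by linarith
  qed
  then have "(\<lambda>k. g (x - zg \<theta> (int k - 1)) * f (int k - 1))
               sums (\<Sum>k<N. g (x - zg \<theta> (int k - 1)) * f (int k - 1))"
    by (intro sums_finite) auto
  also have "(\<Sum>k<N. g (x - zg \<theta> (int k - 1)) * f (int k - 1))
               = (\<Sum>m \<in> {-1 .. \<lfloor>(x - sn) / \<theta>\<rfloor>}. g (x - zg \<theta> m) * f m)"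
    unfolding N_def
    by (rule sum.reindex_bij_witness[of _ "\<lambda>m. nat (m + 1)" "\<lambda>k. int k - 1"]) auto
  finally show ?thesis .
qed

lemma summable_grid_shift:
  fixes V :: "real \<Rightarrow> real" and f :: "int \<Rightarrow> real"
  assumes "0 < \<theta>" "summable (\<lambda>k. f (int k - 1))" "\<And>y. y < sn \<Longrightarrow> V y = A"
  shows "summable (\<lambda>k. V (x - zg \<theta> (int k - 1)) * f (int k - 1))"
proof -
  have "summable (\<lambda>k. (V (x - zg \<theta> (int k - 1)) - A) * f (int k - 1))"
    using sums_grid_shift[OF assms(1), of sn "\<lambda>y. V y - A"] assms(3) by (auto intro: sums_summable)
  moreover have "summable (\<lambda>k. A * f (int k - 1))" using summable_mult[OF assms(2)] .
  ultimately have
    "summable (\<lambda>k. (V (x - zg \<theta> (int k - 1)) - A) * f (int k - 1) + A * f (int k - 1))"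
    by (rule summable_add)
  then show ?thesis by (simp add: algebra_simps)
qed

lemma Hnext_below:
  assumes "0 < \<theta>" "\<And>y. y < sn \<Longrightarrow> V y = A" "y < sn - \<theta>"
  shows "Hnext \<alpha> \<theta> Ct F t V y = Ct y + \<alpha> * (\<Sum>k. A * fgrid F \<theta> t (int k - 1))"
proof -
  have "V (y - zg \<theta> (int k - 1)) = A" for k
  proof (rule assms(2))
    have "zg \<theta> (-1) \<le> zg \<theta> (int k - 1)" using zg_le_iff[OF assms(1)] by simp
    then show "y - zg \<theta> (int k - 1) < sn" using assms(3) by (simp add: zg_def)
  qed
  then show ?thesis unfolding Hnext_def by simp
qed

lemma Hnext_increase_le:
  assumes \<theta>: "0 < \<theta>" and \<alpha>: "0 \<le> \<alpha>"
    and f_nonneg: "\<And>n. 0 \<le> fgrid F \<theta> t n"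
    and f_summable: "summable (\<lambda>k. fgrid F \<theta> t (int k - 1))"
    and V_const: "\<And>y. y < sn \<Longrightarrow> V y = A"
    and V_incr: "left_increase_le V \<phi>" and \<phi>_vanish: "\<And>u y. y < sn \<Longrightarrow> \<phi> u y = 0"
    and C_incr: "Ct x' - Ct x \<le> g * (x - x')" and "x' \<le> x"
  shows "Hnext \<alpha> \<theta> Ct F t V x' - Hnext \<alpha> \<theta> Ct F t V x \<le>
     g * (x - x') + \<alpha> * (\<Sum>m \<in> {-1 .. \<lfloor>(x - sn) / \<theta>\<rfloor>}.
                              \<phi> (x - x') (x - zg \<theta> m) * fgrid F \<theta> t m)"
proof -
  let ?f = "\<lambda>k. fgrid F \<theta> t (int k - 1)"
  define a where "a k = V (x' - zg \<theta> (int k - 1)) * ?f k" for k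
  define b where "b k = V (x - zg \<theta> (int k - 1)) * ?f k" for k
  define \<Phi> where
    "\<Phi> = (\<Sum>m \<in> {-1 .. \<lfloor>(x - sn) / \<theta>\<rfloor>}. \<phi> (x - x') (x - zg \<theta> m) * fgrid F \<theta> t m)"
  have diff_sums: "(\<lambda>k. a k - b k) sums (suminf a - suminf b)"
    unfolding a_def b_def
    by (intro sums_diff summable_sums summable_grid_shift[OF \<theta> f_summable V_const])
  have bound_sums: "(\<lambda>k. \<phi> (x - x') (x - zg \<theta> (int k - 1)) * ?f k) sums \<Phi>"
    unfolding \<Phi>_def using sums_grid_shift[OF \<theta>] \<phi>_vanish by blast
  have termwise: "a k - b k \<le> \<phi> (x - x') (x - zg \<theta> (int k - 1)) * ?f k" for k
  proof -
    have "V (x' - zg \<theta> (int k - 1)) - V (x - zg \<theta> (int k - 1))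
        \<le> \<phi> (x - x') (x - zg \<theta> (int k - 1))"
      using V_incr \<open>x' \<le> x\<close> unfolding left_increase_le_def
      by (metis diff_right_mono diff_diff_eq2 diff_add_cancel)
    from mult_right_mono[OF this f_nonneg] show ?thesis
      unfolding a_def b_def by (simp add: algebra_simps)
  qed
  have "suminf a - suminf b \<le> \<Phi>" by (rule sums_le[OF termwise diff_sums bound_sums])
  then have "\<alpha> * (suminf a - suminf b) \<le> \<alpha> * \<Phi>" using \<alpha> by (rule mult_left_mono)
  moreover have "Hnext \<alpha> \<theta> Ct F t V x' - Hnext \<alpha> \<theta> Ct F t V x
      = Ct x' - Ct x + \<alpha> * (suminf a - suminf b)"
    unfolding Hnext_def a_def b_def by (simp add: algebra_simps)
  ultimately show ?thesis using C_incr unfolding \<Phi>_def by linarith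
qed

lemma Vof_increase_le:
  assumes "left_increase_le H \<psi>" "H S + K \<le> H a" "a \<le> s" "x' \<le> x"
  shows "Vof H S s K x' - Vof H S s K x
           \<le> (if x < s then 0 else if x' < s then \<psi> (x - a) x else \<psi> (x - x') x)"
proof -
  have "H x' - H x \<le> \<psi> (x - x') x" and "H a - H x \<le> \<psi> (x - a) x" if "s \<le> x"
    using assms that unfolding left_increase_le_def by auto
  then show ?thesis using assms(2,4) unfolding Vof_def by auto
qed

section \<open>Backward induction\<close>

lemma psiphi_snd_below:
  assumes "y < s (T - 1 - j)"
  shows "snd (psiphi T \<alpha> \<theta> F \<gamma> s j) u y = 0"
proof (cases j)
  case (Suc j')
  then have "T - 1 - j = T - 2 - j'" by simp
  then show ?thesis using assms Suc by (simp add: Let_def)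
qed (use assms in simp)

lemma psiphi_Suc_fst:
  assumes "0 < \<theta>"
  shows "fst (psiphi T \<alpha> \<theta> F \<gamma> s (Suc j)) u y =
    \<gamma> (T - 2 - j) * u + \<alpha> * (\<Sum>m \<in> {-1 .. \<lfloor>(y - s (Suc (T - 2 - j))) / \<theta>\<rfloor>}.
        snd (psiphi T \<alpha> \<theta> F \<gamma> s j) u (y - zg \<theta> m) * fgrid F \<theta> (T - 2 - j) m)"
proof (cases "y < s (Suc (T - 2 - j)) - \<theta>")
  case True
  then have "\<lfloor>(y - s (Suc (T - 2 - j))) / \<theta>\<rfloor> < -1"
    using assms by (simp add: floor_less_iff pos_divide_less_eq)
  then show ?thesis using True by (simp add: Let_def)
qed (simp add: Let_def)

lemma psiphi_Suc_snd:
  "snd (psiphi T \<alpha> \<theta> F \<gamma> s (Suc j)) u y =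
     (if y < s (T - 2 - j) then 0
      else if y - u < s (T - 2 - j)
        then fst (psiphi T \<alpha> \<theta> F \<gamma> s (Suc j)) (y - s (T - 2 - j) + \<theta>) y
      else fst (psiphi T \<alpha> \<theta> F \<gamma> s (Suc j)) u y)"
  by (simp add: Let_def)

locale grid_model =
  fixes T :: nat and \<alpha> \<theta> :: real and C :: "nat \<Rightarrow> real \<Rightarrow> real"
    and K \<gamma> :: "nat \<Rightarrow> real" and F :: "nat \<Rightarrow> real \<Rightarrow> real"
  assumes alpha_nonneg: "0 \<le> \<alpha>" and theta_pos: "0 < \<theta>"
    and coercive_convex: "t < T \<Longrightarrow> coercive_convex (C t)"
    and K_nonneg: "t < T \<Longrightarrow> 0 \<le> K t"
    and gamma_nonneg: "t < T \<Longrightarrow> 0 \<le> \<gamma> t"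
    and C_increase: "t < T \<Longrightarrow> x' \<le> x \<Longrightarrow> C t x' - C t x \<le> \<gamma> t * (x - x')"
    and F_mono: "t < T \<Longrightarrow> mono (F t)"
    and F_le_one: "t < T \<Longrightarrow> F t a \<le> 1"
begin

abbreviation "stages \<equiv> stage T \<alpha> \<theta> C K F"
abbreviation "estimates \<equiv> psiphi T \<alpha> \<theta> F \<gamma> (ss T \<alpha> \<theta> C K F)"

lemma ss_stage: "j < T \<Longrightarrow> ss T \<alpha> \<theta> C K F (T - 1 - j) = fst (snd (snd (stages j)))"
  by (simp add: ss_def)

lemma stage_bounds_0:
  assumes "0 < T" and stage: "stages 0 = (H, S, s, Ib)"
  shows "Ib \<le> s \<and> left_increase_le H (fst (estimates 0))
    \<and> left_increase_le (Vof H S s (K (T - 1))) (snd (estimates 0))"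
proof -
  obtain t where T: "T = Suc t" using assms(1) by (cases T) auto
  interpret coercive_convex "C t" using coercive_convex T by simp
  have HS: "H = C t" "S = Cmin (C t)" "s = slast (C t) (K t)" "Ib = s" using stage T by auto
  have "ss T \<alpha> \<theta> C K F t = s" using ss_stage[OF assms(1)] HS(3) T by simp
  moreover have "T - 1 = t" using T by simp
  ultimately have estimates_0: "estimates 0 = (\<lambda>u y. \<gamma> t * u, \<lambda>u y. if y < s then 0 else \<gamma> t * u)"
    by (simp cong: if_cong)
  have H_bound: "left_increase_le H (fst (estimates 0))"
    unfolding left_increase_le_def estimates_0 HS using C_increase T by simp
  have "s \<le> S" "H S + K t \<le> H s" using slast_spec K_nonneg T HS by auto
  have "Vof H S s (K t) x' - Vof H S s (K t) x \<le> snd (estimates 0) (x - x') x" if "x' \<le> x" for x x'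
  proof -
    have "\<gamma> t * (x - s) \<le> \<gamma> t * (x - x')" if "x' < s"
      using that gamma_nonneg T by (intro mult_left_mono) auto
    then show ?thesis
      using Vof_increase_le[OF H_bound \<open>H S + K t \<le> H s\<close> order_refl \<open>x' \<le> x\<close>]
      unfolding estimates_0 by (auto split: if_splits)
  qed
  then show ?thesis using H_bound HS(4) T unfolding left_increase_le_def by simp
qed

lemma stage_bounds_Suc:
  assumes j: "Suc j < T" and prev: "stages j = (Hn, Sn, sn, Ibn)" "Ibn \<le> sn"
      "left_increase_le (Vof Hn Sn sn (K (T - 1 - j))) (snd (estimates j))"
    and cur: "stages (Suc j) = (H, S, s, Ib)"
  shows "Ib \<le> s \<and> left_increase_le H (fst (estimates (Suc j)))
    \<and> left_increase_le (Vof H S s (K (T - 1 - Suc j))) (snd (estimates (Suc j)))"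
proof -
  define t where "t = T - 2 - j"
  have t: "t < T" "Suc t = T - 1 - j" "T - 1 - Suc j = t" "T - 2 - j = t"
    using j unfolding t_def by auto
  define Vn where "Vn = Vof Hn Sn sn (K (Suc t))"
  have H: "H = Hnext \<alpha> \<theta> (C t) F t Vn" and Ib: "Ib = Ibarg \<theta> (C t) (K t) (Ig \<theta> (C t) Ibn)"
    using cur by (simp_all add: prev(1) Let_def t_def Vn_def)
  have S: "S = Sg \<theta> H (Ig \<theta> (C t) Ibn) (SUg \<theta> (C t) (K t))"
    using cur by (simp add: prev(1) Let_def t_def Vn_def H)
  have s: "s = sg \<theta> H (K t) Ib S"
    using cur by (simp add: prev(1) Let_def t_def Vn_def H Ib S)
  have ss: "ss T \<alpha> \<theta> C K F (Suc t) = sn" "ss T \<alpha> \<theta> C K F t = s"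
    using ss_stage[of j] ss_stage[of "Suc j"] prev(1) cur j t(2,3) by (simp_all del: stage.simps)
  have Vn_const: "\<And>y. y < sn \<Longrightarrow> Vn y = Hn Sn + K (Suc t)" by (simp add: Vn_def Vof_def)
  interpret coercive_convex "C t" using coercive_convex[OF t(1)] .
  have "Ib \<le> s \<and> H S + K t \<le> H (s - \<theta>)"
  proof (rule threshold_gap[OF theta_pos K_nonneg[OF t(1)] _ refl Ib S s])
    fix y assume "y < Ibn - \<theta>"
    then show "H y = C t y + \<alpha> * (\<Sum>k. (Hn Sn + K (Suc t)) * fgrid F \<theta> t (int k - 1))"
      unfolding H using Hnext_below[OF theta_pos Vn_const] prev(2) by simp
  qed
  then have Ib_le_s: "Ib \<le> s" and gap: "H S + K t \<le> H (s - \<theta>)" by auto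
  have H_bound: "left_increase_le H (fst (estimates (Suc j)))"
    unfolding left_increase_le_def psiphi_Suc_fst[OF theta_pos] t(4) ss(1)
  proof (intro allI impI)
    fix x x' :: real assume "x' \<le> x"
    show "H x' - H x \<le> \<gamma> t * (x - x') + \<alpha> * (\<Sum>m \<in> {-1 .. \<lfloor>(x - sn) / \<theta>\<rfloor>}.
        snd (estimates j) (x - x') (x - zg \<theta> m) * fgrid F \<theta> t m)"
      unfolding H
    proof (rule Hnext_increase_le[OF theta_pos alpha_nonneg _ _ Vn_const])
      show "left_increase_le Vn (snd (estimates j))" using prev(3) t(2) unfolding Vn_def by simp
      show "snd (estimates j) u y = 0" if "y < sn" for u y
        using that psiphi_snd_below ss(1) t(2) by metis
    qed (use fgrid_nonneg[where F = F and t = t, OF theta_pos F_mono[OF t(1)]]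
           summable_fgrid[where F = F and t = t, OF theta_pos F_mono[OF t(1)] F_le_one[OF t(1)]]
           C_increase[OF t(1) \<open>x' \<le> x\<close>] \<open>x' \<le> x\<close> in auto)
  qed
  have "Vof H S s (K t) x' - Vof H S s (K t) x \<le> snd (estimates (Suc j)) (x - x') x" if "x' \<le> x" for x x'
  proof -
    have below: "s - \<theta> \<le> s" using theta_pos by simp
    have shift: "x - (s - \<theta>) = x - s + \<theta>" by simp
    show ?thesis
      using Vof_increase_le[OF H_bound gap below that, unfolded shift] \<open>x' \<le> x\<close>
      unfolding psiphi_Suc_snd[of T \<alpha> \<theta> F \<gamma> _ j] t(4) ss(2) by (auto simp del: psiphi.simps)
  qed
  then show ?thesis using Ib_le_s H_bound t(3) unfolding left_increase_le_def by simp
qed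

lemma stage_bounds:
  assumes "j < T" "stages j = (H, S, s, Ib)"
  shows "Ib \<le> s \<and> left_increase_le H (fst (estimates j))
    \<and> left_increase_le (Vof H S s (K (T - 1 - j))) (snd (estimates j))"
  using assms
proof (induction j arbitrary: H S s Ib)
  case 0
  then show ?case using stage_bounds_0[OF 0] by (simp only: diff_zero)
next
  case (Suc j)
  obtain Hn Sn sn Ibn where prev: "stages j = (Hn, Sn, sn, Ibn)" by (cases "stages j")
  show ?case using Suc.IH[OF _ prev] Suc.prems by (intro stage_bounds_Suc[OF _ prev]) auto
qed

lemma Hs_Vs_bounds:
  assumes "t < T" "x' \<le> x"
  shows "Hs T \<alpha> \<theta> C K F t x' - Hs T \<alpha> \<theta> C K F t x \<le> psibar T \<alpha> \<theta> F \<gamma> (ss T \<alpha> \<theta> C K F) t (x - x') x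
    \<and> Vs T \<alpha> \<theta> C K F t x' - Vs T \<alpha> \<theta> C K F t x \<le> phibar T \<alpha> \<theta> F \<gamma> (ss T \<alpha> \<theta> C K F) t (x - x') x"
proof -
  obtain H S s Ib where stage: "stages (T - 1 - t) = (H, S, s, Ib)" by (cases "stages (T - 1 - t)")
  have j: "T - 1 - t < T" "T - 1 - (T - 1 - t) = t" using assms(1) by auto
  show ?thesis
    using stage_bounds[OF j(1) stage] assms(2) stage
    unfolding Hs_def Vs_def Ss_def psibar_def phibar_def left_increase_le_def j(2)
      ss_def[of T \<alpha> \<theta> C K F t]
    by simp
qed

end

lemma mono_Fdist:
  assumes "prob_space (D t)" "sets (D t) = sets borel"
  shows "mono (Fdist D t)"
proof (rule monoI)
  fix a b :: real assume "a \<le> b"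
  then show "Fdist D t a \<le> Fdist D t b"
    unfolding Fdist_def using assms prob_space_def[of "D t"]
    by (auto intro: finite_measure.finite_measure_mono)
qed

lemma Fdist_le_1: "prob_space (D t) \<Longrightarrow> Fdist D t x \<le> 1"
  unfolding Fdist_def by (rule prob_space.prob_le_1)

lemma grid_model_Cfun:
  assumes "0 < \<alpha>" "0 < \<theta>"
    and "\<forall>t<T. prob_space (D t) \<and> sets (D t) = sets borel"
    and "\<forall>t<T. K t \<ge> 0"
    and "\<forall>t<T. convex_on UNIV (Cfun \<alpha> c G D t) \<and> filterlim (Cfun \<alpha> c G D t) at_top at_infinity"
    and "\<forall>t<T. \<gamma> t \<ge> 0 \<and> (\<forall>x y. \<bar>Cfun \<alpha> c G D t x - Cfun \<alpha> c G D t y\<bar> \<le> \<gamma> t * \<bar>x - y\<bar>)"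
  shows "grid_model T \<alpha> \<theta> (Cfun \<alpha> c G D) K \<gamma> (Fdist D)"
proof (rule grid_model.intro)
  show "coercive_convex (Cfun \<alpha> c G D t)" if "t < T" for t
    using assms(5) that by (simp add: coercive_convex_def)
  show "mono (Fdist D t)" if "t < T" for t using assms(3) that by (simp add: mono_Fdist)
  show "Fdist D t x \<le> 1" if "t < T" for t x using assms(3) that by (simp add: Fdist_le_1)
  show "Cfun \<alpha> c G D t x' - Cfun \<alpha> c G D t x \<le> \<gamma> t * (x - x')" if "t < T" "x' \<le> x" for t x x'
  proof -
    have "\<bar>Cfun \<alpha> c G D t x' - Cfun \<alpha> c G D t x\<bar> \<le> \<gamma> t * \<bar>x' - x\<bar>" using assms(6) that(1) by blast
    then show ?thesis using that(2) by (simp add: abs_le_iff)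
  qed
qed (use assms in auto)

theorem lemma4p5:
  fixes T :: nat and \<alpha> \<theta> :: real and c K \<gamma> :: "nat \<Rightarrow> real"
    and G :: "nat \<Rightarrow> real \<Rightarrow> real" and D :: "nat \<Rightarrow> real measure"
  assumes T2: "T \<ge> 2"
    and alpha: "0 < \<alpha>" "\<alpha> \<le> 1"
    and theta: "\<theta> > 0"
    and demand: "\<forall>t<T. prob_space (D t) \<and> sets (D t) = sets borel \<and>
                    (AE x in D t. 0 \<le> x) \<and> integrable (D t) (\<lambda>x. x)"
    and Kpos: "\<forall>t<T. K t \<ge> 0"
    and Kdec: "\<forall>t. t + 2 \<le> T \<longrightarrow> \<alpha> * K (Suc t) \<le> K t"
    and Cconv: "\<forall>t<T. convex_on UNIV (Cfun \<alpha> c G D t) \<and>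
                      filterlim (Cfun \<alpha> c G D t) at_top at_infinity"
    and Lip: "\<forall>t<T. \<gamma> t \<ge> 0 \<and>
               (\<forall>x y. \<bar>Cfun \<alpha> c G D t x - Cfun \<alpha> c G D t y\<bar> \<le> \<gamma> t * \<bar>x - y\<bar>)"
  shows "\<forall>t<T. \<forall>x x'. x' \<le> x \<longrightarrow>
     Hs T \<alpha> \<theta> (Cfun \<alpha> c G D) K (Fdist D) t x' - Hs T \<alpha> \<theta> (Cfun \<alpha> c G D) K (Fdist D) t x
       \<le> psibar T \<alpha> \<theta> (Fdist D) \<gamma> (ss T \<alpha> \<theta> (Cfun \<alpha> c G D) K (Fdist D)) t (x - x') x \<and>
     Vs T \<alpha> \<theta> (Cfun \<alpha> c G D) K (Fdist D) t x' - Vs T \<alpha> \<theta> (Cfun \<alpha> c G D) K (Fdist D) t x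
       \<le> phibar T \<alpha> \<theta> (Fdist D) \<gamma> (ss T \<alpha> \<theta> (Cfun \<alpha> c G D) K (Fdist D)) t (x - x') x"
proof -
  have "grid_model T \<alpha> \<theta> (Cfun \<alpha> c G D) K \<gamma> (Fdist D)"
    using alpha(1) theta demand Kpos Cconv Lip by (intro grid_model_Cfun) auto
  then show ?thesis using grid_model.Hs_Vs_bounds by blast
qed

end
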